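(* Let $\mathbf{A}$ be a non-trivial algebra whose set $\mathcal{F}$ of basic operations contains no constant symbols, and let $h$ be a unary function on $A$. Then the matrices $\langle\mathbf{A}^{\natural},F^{\natural}\rangle$ and $\langle\mathbf{A}^{\flat},G^{\flat}\rangle$ (defined below) are reduced.
   Context: A matrix $\langle\mathbf{B},H\rangle$ ($H\subseteq B$) is reduced if the largest congruence of $\mathbf{B}$ for which $H$ is a union of blocks is the identity. Construction of $\mathbf{A}^{\natural}$: its universe is the disjoint union of eight copies $A_1,\dots,A_8$ of $A$; for $a\in A$, $a^i$ denotes its copy in $A_i$. Its basic operations are those of $\mathcal{F}$ plus a ternary $\heartsuit$ and a unary $\Box$. For $n$-ary $f\in\mathcal{F}$: $f(a_1^{m_1},\dots,a_n^{m_n})=(f^{\mathbf{A}}(a_1,\dots,a_n))^5$. For $a^m,b^n,c^k$: $\heartsuit(a^m,b^n,c^k)=a^1$ if $a^m=c^k$, $h(a)^5=b^n$ and $m\in\{1,3,4\}$; $=a^2$ if $a^m=c^k$, $h(a)^5=b^n$ and $m\in\{2,5,6,7,8\}$; $=a^4$ if $m,k\in\{1,3,4\}$ and ($a^m\neq c^k$ or $h(a)^5\ne b^n$); $=a^7$ if $\{m,k\}\cap\{2,5,6,7,8\}\neq\emptyset$ and ($a^m\ne c^k$ or $h(a)^5\ne b^n$). $\Box(a^m)=a^m$ if $m\in\{1,2\}$; $=a^{m-1}$ if $m\ge3$ is even; $=a^{m+1}$ if $m\ge3$ is odd. $F^{\natural}=A_1\cup A_2$. Construction of $\mathbf{A}^{\flat}$: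 universe $A_1\cup A_2\cup\{0,1\}$ (two disjoint copies of $A$, with $a^i$ the copy of $a$ in $A_i$, plus two fresh elements $0,1$). Basic operations: those of $\mathcal{F}$, a binary $+$, a unary $\Box^{a}$ for each $a\in A$, and a constant $\mathbf{1}$ interpreted as $1$. For $n$-ary $f\in\mathcal{F}$: $f(b_1,\dots,b_n)=(f^{\mathbf{A}}(a_1,\dots,a_n))^2$ if $b_i\in\{a_i^1,a_i^2\}$ for all $i$; $=1$ if $b_1=\dots=b_n=1$; $=0$ otherwise. $a+b=1$ if either $a=b=1$ or ($a=c^1$ for some $c\in A$ and $b=h(c)^2$); $a+b=0$ otherwise. $\Box^{a}(b)=b$ if $b\in(A_1\cup A_2)\setminus\{a^1,a^2\}$; $\Box^a(a^1)=a^2$; $\Box^a(a^2)=a^1$; $\Box^a(0)=\Box^a(1)=0$. $G^{\flat}=A_1\cup\{1\}$. *)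

theory Defs
  imports Main
begin

definition congruence ::
  "'b set \<Rightarrow> 's set \<Rightarrow> ('s \<Rightarrow> nat) \<Rightarrow> ('s \<Rightarrow> 'b list \<Rightarrow> 'b) \<Rightarrow> ('b \<times> 'b) set \<Rightarrow> bool" where
  "congruence B S ar ops \<theta> \<longleftrightarrow> equiv B \<theta> \<and>
     (\<forall>s\<in>S. \<forall>xs ys. length xs = ar s \<longrightarrow> length ys = ar s \<longrightarrow> set xs \<subseteq> B \<longrightarrow> set ys \<subseteq> B \<longrightarrow>
        list_all2 (\<lambda>x y. (x, y) \<in> \<theta>) xs ys \<longrightarrow> (ops s xs, ops s ys) \<in> \<theta>)"

definition compatible :: "('b \<times> 'b) set \<Rightarrow> 'b set \<Rightarrow> bool" where
  "compatible \<theta> H \<longleftrightarrow> (\<forall>x y. (x, y) \<in> \<theta> \<longrightarrow> x \<in> H \<longrightarrow> y \<in> H)"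

definition reduced ::
  "'b set \<Rightarrow> 's set \<Rightarrow> ('s \<Rightarrow> nat) \<Rightarrow> ('s \<Rightarrow> 'b list \<Rightarrow> 'b) \<Rightarrow> 'b set \<Rightarrow> bool" where
  "reduced B S ar ops H \<longleftrightarrow>
     congruence B S ar ops (Id_on B) \<and> compatible (Id_on B) H \<and>
     (\<forall>\<theta>. congruence B S ar ops \<theta> \<and> compatible \<theta> H \<longrightarrow> \<theta> \<subseteq> Id_on B)"

text \<open>Elements a^m are pairs (a, m) with m in {1..8}.\<close>

datatype 'f nat_sym = NOp 'f | NHeart | NBox

definition nat_carrier :: "'a set \<Rightarrow> ('a \<times> nat) set" where
  "nat_carrier A = A \<times> {1..8}"

fun nat_ar :: "('f \<Rightarrow> nat) \<Rightarrow> 'f nat_sym \<Rightarrow> nat" where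
  "nat_ar ar (NOp f) = ar f"
| "nat_ar ar NHeart = 3"
| "nat_ar ar NBox = 1"

fun heart :: "('a \<Rightarrow> 'a) \<Rightarrow> 'a \<times> nat \<Rightarrow> 'a \<times> nat \<Rightarrow> 'a \<times> nat \<Rightarrow> 'a \<times> nat" where
  "heart h (a, m) (b, n) (c, k) =
     (if (a, m) = (c, k) \<and> (h a, 5) = (b, n) then
        (if m \<in> {1, 3, 4} then (a, 1) else (a, 2))
      else if m \<in> {1, 3, 4} \<and> k \<in> {1, 3, 4} then (a, 4)
      else (a, 7))"

fun nbox :: "'a \<times> nat \<Rightarrow> 'a \<times> nat" where
  "nbox (a, m) =
     (if m \<in> {1, 2} then (a, m) else if even m then (a, m - 1) else (a, m + 1))"

fun nat_ops :: "('f \<Rightarrow> 'a list \<Rightarrow> 'a) \<Rightarrow> ('a \<Rightarrow> 'a) \<Rightarrow> 'f nat_sym \<Rightarrow> ('a \<times> nat) list \<Rightarrow> 'a \<times> nat" where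
  "nat_ops opA h (NOp f) xs = (opA f (map fst xs), 5)"
| "nat_ops opA h NHeart xs = heart h (xs ! 0) (xs ! 1) (xs ! 2)"
| "nat_ops opA h NBox xs = nbox (xs ! 0)"

definition nat_filter :: "'a set \<Rightarrow> ('a \<times> nat) set" where
  "nat_filter A = A \<times> {1, 2}"

datatype 'a flat_el = Cp nat 'a | FZero | FOne

datatype ('f, 'a) flat_sym = FlOp 'f | FlPlus | FlBox 'a | FlOne

definition flat_carrier :: "'a set \<Rightarrow> 'a flat_el set" where
  "flat_carrier A = {Cp i a | i a. i \<in> {1, 2} \<and> a \<in> A} \<union> {FZero, FOne}"

definition flat_syms :: "'a set \<Rightarrow> ('f, 'a) flat_sym set" where
  "flat_syms A = range FlOp \<union> {FlPlus, FlOne} \<union> FlBox ` A"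

fun flat_ar :: "('f \<Rightarrow> nat) \<Rightarrow> ('f, 'a) flat_sym \<Rightarrow> nat" where
  "flat_ar ar (FlOp f) = ar f"
| "flat_ar ar FlPlus = 2"
| "flat_ar ar (FlBox a) = 1"
| "flat_ar ar FlOne = 0"

fun is_cp :: "'a flat_el \<Rightarrow> bool" where
  "is_cp (Cp i a) = (i \<in> {1, 2})"
| "is_cp _ = False"

fun cp_val :: "'a flat_el \<Rightarrow> 'a" where
  "cp_val (Cp i a) = a"
| "cp_val _ = undefined"

definition flat_plus :: "('a \<Rightarrow> 'a) \<Rightarrow> 'a flat_el \<Rightarrow> 'a flat_el \<Rightarrow> 'a flat_el" where
  "flat_plus h x y =
     (if (x = FOne \<and> y = FOne) \<or> (\<exists>c. x = Cp 1 c \<and> y = Cp 2 (h c)) then FOne else FZero)"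

definition flat_box :: "'a \<Rightarrow> 'a flat_el \<Rightarrow> 'a flat_el" where
  "flat_box a b =
     (if b = Cp 1 a then Cp 2 a
      else if b = Cp 2 a then Cp 1 a
      else if b = FZero \<or> b = FOne then FZero
      else b)"

fun flat_ops :: "('f \<Rightarrow> 'a list \<Rightarrow> 'a) \<Rightarrow> ('a \<Rightarrow> 'a) \<Rightarrow> ('f, 'a) flat_sym \<Rightarrow> 'a flat_el list \<Rightarrow> 'a flat_el" where
  "flat_ops opA h (FlOp f) xs =
     (if (\<forall>b\<in>set xs. is_cp b) then Cp 2 (opA f (map cp_val xs))
      else if (\<forall>b\<in>set xs. b = FOne) then FOne
      else FZero)"
| "flat_ops opA h FlPlus xs = flat_plus h (xs ! 0) (xs ! 1)"
| "flat_ops opA h (FlBox a) xs = flat_box a (xs ! 0)"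
| "flat_ops opA h FlOne xs = FOne"

definition flat_filter :: "'a set \<Rightarrow> 'a flat_el set" where
  "flat_filter A = {Cp 1 a | a. a \<in> A} \<union> {FOne}"

end

theory Submission
  imports Defs
begin

text \<open>A matrix is reduced as soon as any two distinct elements are told apart by the filter,
  either directly or after plugging them into one argument place of a basic operation whose
  other arguments are fixed. Both constructions are designed to make this happen in one step:
  in \<open>A\<^sup>\<natural>\<close> the operation \<open>\<heartsuit>(a\<^sup>m, h(a)\<^sup>5, _)\<close> sends \<open>a\<^sup>m\<close> into
  the filter and every other element out of it; in \<open>A\<^sup>\<flat>\<close> the operation
  \<open>\<box>\<^sup>a\<close> swaps \<open>a\<^sup>1\<close> and \<open>a\<^sup>2\<close> while fixing the other copies, and
  \<open>_ + h(a)\<^sup>2\<close> separates \<open>a\<^sup>1\<close> from \<open>1\<close>.\<close>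

lemma congruence_subset: "congruence B S ar ops \<theta> \<Longrightarrow> \<theta> \<subseteq> B \<times> B"
  unfolding congruence_def equiv_def by blast

lemma congruence_refl: "congruence B S ar ops \<theta> \<Longrightarrow> x \<in> B \<Longrightarrow> (x, x) \<in> \<theta>"
  unfolding congruence_def equiv_def refl_on_def by blast

lemma congruence_sym: "congruence B S ar ops \<theta> \<Longrightarrow> (x, y) \<in> \<theta> \<Longrightarrow> (y, x) \<in> \<theta>"
  unfolding congruence_def equiv_def sym_def by blast

lemma compatible_congruence_iff:
  assumes "congruence B S ar ops \<theta>" "compatible \<theta> H" "(x, y) \<in> \<theta>"
  shows "x \<in> H \<longleftrightarrow> y \<in> H"
  using assms congruence_sym unfolding compatible_def by metis

lemma congruence_Id_on:
  assumes "\<And>s xs. s \<in> S \<Longrightarrow> length xs = ar s \<Longrightarrow> set xs \<subseteq> B \<Longrightarrow> ops s xs \<in> B"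
  shows "congruence B S ar ops (Id_on B)"
  unfolding congruence_def
proof (intro conjI ballI allI impI)
  show "equiv B (Id_on B)"
    by (rule equivI) (auto simp: refl_on_def sym_def trans_def)
next
  fix s xs ys
  assume "s \<in> S" "length xs = ar s" "set xs \<subseteq> B"
    and related: "list_all2 (\<lambda>x y. (x, y) \<in> Id_on B) xs ys"
  have "xs = ys"
    using list_all2_mono[OF related] by (auto simp: list_all2_eq)
  then show "(ops s xs, ops s ys) \<in> Id_on B"
    using assms \<open>s \<in> S\<close> \<open>length xs = ar s\<close> \<open>set xs \<subseteq> B\<close> by auto
qed

lemma congruence_translation:
  assumes cong: "congruence B S ar ops \<theta>" and "(x, y) \<in> \<theta>" and "s \<in> S"
    and "set us \<subseteq> B" "set vs \<subseteq> B" "Suc (length us + length vs) = ar s"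
  shows "(ops s (us @ x # vs), ops s (us @ y # vs)) \<in> \<theta>"
proof -
  have "x \<in> B" "y \<in> B"
    using congruence_subset[OF cong] \<open>(x, y) \<in> \<theta>\<close> by auto
  have "list_all2 (\<lambda>x y. (x, y) \<in> \<theta>) zs zs" if "set zs \<subseteq> B" for zs
    using that congruence_refl[OF cong] by (auto simp: list_all2_same)
  then have "list_all2 (\<lambda>x y. (x, y) \<in> \<theta>) (us @ x # vs) (us @ y # vs)"
    using assms by (auto intro: list_all2_appendI)
  then show ?thesis
    using cong assms \<open>x \<in> B\<close> \<open>y \<in> B\<close> unfolding congruence_def by auto
qed

definition separated_by_translation ::
  "'b set \<Rightarrow> 's set \<Rightarrow> ('s \<Rightarrow> nat) \<Rightarrow> ('s \<Rightarrow> 'b list \<Rightarrow> 'b) \<Rightarrow> 'b set \<Rightarrow> 'b \<Rightarrow> 'b \<Rightarrow> bool" where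
  "separated_by_translation B S ar ops H x y \<longleftrightarrow>
     (\<exists>s\<in>S. \<exists>us vs. set us \<subseteq> B \<and> set vs \<subseteq> B \<and> Suc (length us + length vs) = ar s \<and>
        (ops s (us @ x # vs) \<in> H \<longleftrightarrow> ops s (us @ y # vs) \<notin> H))"

lemma separated_by_translationI:
  assumes "s \<in> S" "set us \<subseteq> B" "set vs \<subseteq> B" "Suc (length us + length vs) = ar s"
    and "ops s (us @ x # vs) \<in> H \<longleftrightarrow> ops s (us @ y # vs) \<notin> H"
  shows "separated_by_translation B S ar ops H x y"
  using assms unfolding separated_by_translation_def by blast

lemma separated_by_translation_commute:
  "separated_by_translation B S ar ops H x y \<Longrightarrow> separated_by_translation B S ar ops H y x"
  unfolding separated_by_translation_def by blast

lemma compatible_congruence_not_separated: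
  assumes cong: "congruence B S ar ops \<theta>" and "compatible \<theta> H" and "(x, y) \<in> \<theta>"
  shows "\<not> separated_by_translation B S ar ops H x y"
proof
  assume "separated_by_translation B S ar ops H x y"
  then obtain s us vs where "s \<in> S" "set us \<subseteq> B" "set vs \<subseteq> B"
    "Suc (length us + length vs) = ar s"
    and "ops s (us @ x # vs) \<in> H \<longleftrightarrow> ops s (us @ y # vs) \<notin> H"
    unfolding separated_by_translation_def by blast
  then show False
    using compatible_congruence_iff[OF cong \<open>compatible \<theta> H\<close>] congruence_translation[OF cong \<open>(x, y) \<in> \<theta>\<close>] by blast
qed

lemma reducedI_separated:
  assumes closed: "\<And>s xs. s \<in> S \<Longrightarrow> length xs = ar s \<Longrightarrow> set xs \<subseteq> B \<Longrightarrow> ops s xs \<in> B"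
    and separated: "\<And>x y. x \<in> B \<Longrightarrow> y \<in> B \<Longrightarrow> x \<noteq> y \<Longrightarrow>
      (x \<in> H \<longleftrightarrow> y \<notin> H) \<or> separated_by_translation B S ar ops H x y"
  shows "reduced B S ar ops H"
  unfolding reduced_def
proof (intro conjI allI impI)
  show "congruence B S ar ops (Id_on B)"
    using closed by (rule congruence_Id_on)
  show "compatible (Id_on B) H"
    unfolding compatible_def by auto
  fix \<theta> assume "congruence B S ar ops \<theta> \<and> compatible \<theta> H"
  then have cong: "congruence B S ar ops \<theta>" and "compatible \<theta> H" by auto
  have "x = y" if "(x, y) \<in> \<theta>" for x y
  proof (rule ccontr)
    assume "x \<noteq> y"
    moreover have "x \<in> B" "y \<in> B"
      using congruence_subset[OF cong] that by auto
    moreover have "x \<in> H \<longleftrightarrow> y \<in> H"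
      using compatible_congruence_iff[OF cong \<open>compatible \<theta> H\<close> that] .
    ultimately show False
      using separated compatible_congruence_not_separated[OF cong \<open>compatible \<theta> H\<close> that] by blast
  qed
  then show "\<theta> \<subseteq> Id_on B"
    using congruence_subset[OF cong] by auto
qed

lemma nat_ops_closed:
  assumes closed: "\<And>f xs. length xs = ar f \<Longrightarrow> set xs \<subseteq> A \<Longrightarrow> opA f xs \<in> A"
    and "length xs = nat_ar ar s" "set xs \<subseteq> nat_carrier A"
  shows "nat_ops opA h s xs \<in> nat_carrier A"
proof (cases s)
  case (NOp f)
  have "opA f (map fst xs) \<in> A"
    using closed[of "map fst xs" f] assms(2,3) NOp by (force simp: nat_carrier_def)
  then show ?thesis
    using NOp by (simp add: nat_carrier_def)
next
  case NHeart
  then obtain a m where "xs ! 0 = (a, m)" "a \<in> A"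
    using assms(2,3) nth_mem[of 0 xs] by (fastforce simp: nat_carrier_def)
  moreover obtain b n where "xs ! 1 = (b, n)" by fastforce
  moreover obtain c k where "xs ! 2 = (c, k)" by fastforce
  ultimately show ?thesis
    using NHeart by (auto simp: nat_carrier_def)
next
  case NBox
  then obtain a m where "xs ! 0 = (a, m)" "a \<in> A" "m \<in> {1..8}"
    using assms(2,3) nth_mem[of 0 xs] by (fastforce simp: nat_carrier_def)
  moreover have "odd m \<Longrightarrow> m \<le> 7"
    using \<open>m \<in> {1..8}\<close> by (auto elim: oddE)
  ultimately show ?thesis
    using NBox by (auto simp: nat_carrier_def)
qed

lemma heart_same: "heart h (a, m) (h a, 5) (a, m) \<in> {(a, 1), (a, 2)}"
  by simp

lemma heart_different: "y \<noteq> (a, m) \<Longrightarrow> heart h (a, m) (h a, 5) y \<in> {(a, 4), (a, 7)}"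
  by (cases y) auto

lemma nat_separated:
  assumes h_unary: "\<And>a. a \<in> A \<Longrightarrow> h a \<in> A"
    and "x \<in> nat_carrier A" "x \<noteq> y"
  shows "separated_by_translation (nat_carrier A) UNIV (nat_ar ar) (nat_ops opA h) (nat_filter A) x y"
proof -
  obtain a m where x: "x = (a, m)" "a \<in> A"
    using \<open>x \<in> nat_carrier A\<close> by (auto simp: nat_carrier_def)
  show ?thesis
  proof (rule separated_by_translationI[where s = NHeart and us = "[x, (h a, 5)]" and vs = "[]"])
    show "set [x, (h a, 5)] \<subseteq> nat_carrier A"
      using x h_unary \<open>x \<in> nat_carrier A\<close> by (auto simp: nat_carrier_def)
    show "nat_ops opA h NHeart ([x, (h a, 5)] @ x # []) \<in> nat_filter A \<longleftrightarrow>
        nat_ops opA h NHeart ([x, (h a, 5)] @ y # []) \<notin> nat_filter A"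
      using heart_same[of h a m] heart_different[of y a m h] x \<open>x \<noteq> y\<close>
      by (auto simp: nat_filter_def)
  qed auto
qed

lemma reduced_nat:
  assumes "\<And>f xs. length xs = ar f \<Longrightarrow> set xs \<subseteq> A \<Longrightarrow> opA f xs \<in> A"
    and "\<And>a. a \<in> A \<Longrightarrow> h a \<in> A"
  shows "reduced (nat_carrier A) UNIV (nat_ar ar) (nat_ops opA h) (nat_filter A)"
  using assms by (intro reducedI_separated nat_ops_closed) (auto intro: nat_separated)

lemma flat_ops_closed:
  assumes closed: "\<And>f xs. length xs = ar f \<Longrightarrow> set xs \<subseteq> A \<Longrightarrow> opA f xs \<in> A"
    and "s \<in> flat_syms A" "length xs = flat_ar ar s" "set xs \<subseteq> flat_carrier A"
  shows "flat_ops opA h s xs \<in> flat_carrier A"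
proof (cases s)
  case (FlOp f)
  have "opA f (map cp_val xs) \<in> A" if "\<forall>b\<in>set xs. is_cp b"
  proof (rule closed)
    show "length (map cp_val xs) = ar f"
      using assms(3) FlOp by simp
    show "set (map cp_val xs) \<subseteq> A"
      using that assms(4) by (fastforce simp: flat_carrier_def)
  qed
  then show ?thesis
    using FlOp by (auto simp: flat_carrier_def)
next
  case (FlBox a)
  have "a \<in> A"
    using FlBox assms(2) by (auto simp: flat_syms_def)
  moreover have "xs ! 0 \<in> flat_carrier A"
    using FlBox assms(3,4) by auto
  ultimately show ?thesis
    using FlBox by (auto simp: flat_carrier_def flat_box_def)
qed (auto simp: flat_carrier_def flat_plus_def)

lemma flat_separated_Cp1:
  assumes "a \<in> A" "h a \<in> A" "y \<in> flat_filter A" "y \<noteq> Cp 1 a"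
  shows "separated_by_translation (flat_carrier A) (flat_syms A) (flat_ar ar) (flat_ops opA h)
    (flat_filter A) (Cp 1 a) y"
proof (cases "y = FOne")
  case True
  show ?thesis
  proof (rule separated_by_translationI[where s = FlPlus and us = "[]" and vs = "[Cp 2 (h a)]"])
    show "set [Cp 2 (h a)] \<subseteq> flat_carrier A"
      using \<open>h a \<in> A\<close> by (auto simp: flat_carrier_def)
  qed (use True in \<open>auto simp: flat_syms_def flat_plus_def flat_filter_def\<close>)
next
  case False
  then obtain b where "y = Cp 1 b" "b \<in> A" "b \<noteq> a"
    using assms(3,4) by (auto simp: flat_filter_def)
  then show ?thesis
    by (intro separated_by_translationI[where s = "FlBox a" and us = "[]" and vs = "[]"])
      (use \<open>a \<in> A\<close> in \<open>auto simp: flat_syms_def flat_box_def flat_filter_def\<close>)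
qed

lemma flat_separated_Cp2:
  assumes "a \<in> A" "y \<in> flat_carrier A" "y \<notin> flat_filter A" "y \<noteq> Cp 2 a"
  shows "separated_by_translation (flat_carrier A) (flat_syms A) (flat_ar ar) (flat_ops opA h)
    (flat_filter A) (Cp 2 a) y"
proof (rule separated_by_translationI[where s = "FlBox a" and us = "[]" and vs = "[]"])
  have "y = FZero \<or> (\<exists>b. y = Cp 2 b \<and> b \<noteq> a)"
    using assms(2-4) by (auto simp: flat_carrier_def flat_filter_def)
  then show "flat_ops opA h (FlBox a) ([] @ Cp 2 a # []) \<in> flat_filter A \<longleftrightarrow>
      flat_ops opA h (FlBox a) ([] @ y # []) \<notin> flat_filter A"
    using \<open>a \<in> A\<close> by (auto simp: flat_box_def flat_filter_def)
qed (use \<open>a \<in> A\<close> in \<open>auto simp: flat_syms_def\<close>)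

lemma flat_separated_Cp:
  assumes h_unary: "\<And>a. a \<in> A \<Longrightarrow> h a \<in> A"
    and "x \<in> flat_carrier A" "x \<notin> {FZero, FOne}"
    and "y \<in> flat_carrier A" "x \<noteq> y" "x \<in> flat_filter A \<longleftrightarrow> y \<in> flat_filter A"
  shows "separated_by_translation (flat_carrier A) (flat_syms A) (flat_ar ar) (flat_ops opA h)
    (flat_filter A) x y"
proof -
  consider (Cp1) a where "x = Cp 1 a" "a \<in> A" | (Cp2) a where "x = Cp 2 a" "a \<in> A"
    using assms(2,3) by (auto simp: flat_carrier_def)
  then show ?thesis
  proof cases
    case Cp1
    then have "y \<in> flat_filter A"
      using assms(6) by (auto simp: flat_filter_def)
    with Cp1 show ?thesis
      using flat_separated_Cp1[where h = h, OF \<open>a \<in> A\<close> h_unary[OF \<open>a \<in> A\<close>], of y] assms(5) by auto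
  next
    case Cp2
    then have "y \<notin> flat_filter A"
      using assms(6) by (auto simp: flat_filter_def)
    with Cp2 show ?thesis
      using flat_separated_Cp2[OF \<open>a \<in> A\<close> assms(4)] assms(5) by auto
  qed
qed

lemma flat_separated:
  assumes h_unary: "\<And>a. a \<in> A \<Longrightarrow> h a \<in> A"
    and "x \<in> flat_carrier A" "y \<in> flat_carrier A" "x \<noteq> y" "x \<in> flat_filter A \<longleftrightarrow> y \<in> flat_filter A"
  shows "separated_by_translation (flat_carrier A) (flat_syms A) (flat_ar ar) (flat_ops opA h)
    (flat_filter A) x y"
proof (cases "x \<in> {FZero, FOne}")
  case True
  then have "y \<notin> {FZero, FOne}"
    using assms(4,5) by (auto simp: flat_filter_def)
  then have "separated_by_translation (flat_carrier A) (flat_syms A) (flat_ar ar) (flat_ops opA h)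
    (flat_filter A) y x"
    using flat_separated_Cp[of A h y x] h_unary assms(2-5) by auto
  then show ?thesis
    by (rule separated_by_translation_commute)
next
  case False
  then show ?thesis
    using flat_separated_Cp[of A h x y] h_unary assms(2-5) by simp
qed

lemma reduced_flat:
  assumes "\<And>f xs. length xs = ar f \<Longrightarrow> set xs \<subseteq> A \<Longrightarrow> opA f xs \<in> A"
    and "\<And>a. a \<in> A \<Longrightarrow> h a \<in> A"
  shows "reduced (flat_carrier A) (flat_syms A) (flat_ar ar) (flat_ops opA h) (flat_filter A)"
  using assms by (intro reducedI_separated flat_ops_closed) (auto intro: flat_separated)

theorem lemma4p1:
  fixes A :: "'a set" and ar :: "'f \<Rightarrow> nat" and opA :: "'f \<Rightarrow> 'a list \<Rightarrow> 'a"
    and h :: "'a \<Rightarrow> 'a"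
  assumes closed: "\<And>f xs. length xs = ar f \<Longrightarrow> set xs \<subseteq> A \<Longrightarrow> opA f xs \<in> A"
    and nontrivial: "\<exists>x\<in>A. \<exists>y\<in>A. x \<noteq> y"
    and no_constants: "\<And>f. ar f \<noteq> 0"
    and h_unary: "\<And>a. a \<in> A \<Longrightarrow> h a \<in> A"
  shows "reduced (nat_carrier A) UNIV (nat_ar ar) (nat_ops opA h) (nat_filter A)
       \<and> reduced (flat_carrier A) (flat_syms A) (flat_ar ar) (flat_ops opA h) (flat_filter A)"
  using reduced_nat[OF closed h_unary] reduced_flat[OF closed h_unary] ..

end
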